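(* Assume the standing assumptions and additionally that every $\sigma_l$ is differentiable everywhere, and let $\Omega=\Omega_{out}$ with $\lambda>0$, $1\le p<\infty$. Then for every $B\in\mathbb{R}$, the set of dimension tuples $\mathbf{d}=(d_1,\dots,d_{L-1})$ for which there exists a proper $B$-local minimum $(\mathbf{d},\mathbf{W})$ of $E$ is bounded.
   Context: Network: for dimensions $d_0,\dots,d_L$ and weights $\mathbf{W}=(W_1,\dots,W_L)$, $W_l\in\mathbb{R}^{d_{l-1}\times d_l}$, define for a row vector $x\in\mathbb{R}^{d_0}$: $x_0=x$, $z_l=x_{l-1}W_l$, $x_l=\sigma_l.(z_l)$ (elementwise), $f(\mathbf{W},x)=x_L$; $d_0,d_L$ are fixed and $d_1,\dots,d_{L-1}$ vary. $E(\mathbf{d},\mathbf{W})=\frac{1}{|D|}\sum_{(x,y)\in D}e(f(\mathbf{W},x),y)+\Omega(\mathbf{W},\lambda,p)$ with $D$ a finite dataset of pairs $(x,y)$, $x\in\mathbb{R}^{d_0}$, $y\in Y$. $\Omega_{in}(\mathbf{W},\lambda,p)=\lambda\sum_{l=1}^L\sum_{j=1}^{d_l}\|(W_l(i,j))_{i}\|_p$, $\Omega_{out}(\mathbf{W},\lambda,p)=\lambda\sum_{l=1}^L\sum_{i=1}^{d_{l-1}}\|(W_l(i,j))_{j}\|_p$. Standing assumptions: each $\sigma_l$ is left- and right-differentiable everywhere, and there are functions $b_{1,l},b_{2,l}:\mathbb{R}_{\ge0}\to\mathbb{R}_{\ge0}$ with $|\sigma_l(s)|\le b_{1,l}(S)|s|$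 and $|\sigma_l^{\leftarrow}(s)|,|\sigma_l^{\rightarrow}(s)|\le b_{2,l}(S)$ whenever $|s|\le S$; $e$ is nonnegative, differentiable in its first argument, and there is $b_3$ with $e(v,y)\le S\Rightarrow\|\partial e(v,y)/\partial v\|_\infty\le b_3(S)$. Definitions: The fan-in of hidden unit $j$ in layer $l$ ($1\le l\le L-1$) is column $j$ of $W_l$; its fan-out is row $j$ of $W_{l+1}$. A pair $(\mathbf{d},\mathbf{W})$ is a local minimum of $E$ if $\mathbf{W}$ is a local minimum of $E(\mathbf{d},\cdot)$ with $\mathbf{d}$ fixed; it is $B$-locally minimal if moreover $E(\mathbf{d},\mathbf{W})\le B$. The proper dimensionality of $\mathbf{W}$ is the dimension tuple obtained by deleting all hidden units whose fan-in or fan-out (or both) is the zero vector; $(\mathbf{d},\mathbf{W})$ is proper if $\mathbf{d}$ equals the proper dimensionality of $\mathbf{W}$. A proper $B$-local minimum is a $B$-locally minimal local minimum that is proper. *)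

theory Defs
  imports "HOL-Analysis.Analysis"
begin

(* L        : number of layers (layers are numbered 1..L).
   d        : nat => nat, d l = width of layer l (d 0 = input dim, d L = output dim).
   W        : nat => nat => nat => real, W l i j = entry (i,j) of W_l (0-based indices,
              i < d (l-1), j < d l); entries outside this range are required to be 0.
   sigma    : nat => real => real, sigma l = activation of layer l.
   inputs   : nat => real (only the components < d 0 are used).
   outputs  : real^'o, where d L = CARD('o); output unit j < d L corresponds to the
              coordinate (inv enum_idx j) of a fixed canonical enumeration of 'o. *)

type_synonym weights = "nat \<Rightarrow> nat \<Rightarrow> nat \<Rightarrow> real"

definition enum_idx :: "'a::finite \<Rightarrow> nat" where
  "enum_idx = (SOME f. bij_betw f (UNIV::'a set) {..<CARD('a)})"

definition valid_weights :: "nat \<Rightarrow> (nat \<Rightarrow> nat) \<Rightarrow> weights \<Rightarrow> bool" where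
  "valid_weights L d W \<longleftrightarrow>
     (\<forall>l i j. W l i j \<noteq> 0 \<longrightarrow> 1 \<le> l \<and> l \<le> L \<and> i < d (l - 1) \<and> j < d l)"

fun layer_out :: "(nat \<Rightarrow> real \<Rightarrow> real) \<Rightarrow> (nat \<Rightarrow> nat) \<Rightarrow> weights \<Rightarrow> (nat \<Rightarrow> real)
                    \<Rightarrow> nat \<Rightarrow> (nat \<Rightarrow> real)" where
  "layer_out \<sigma> d W x 0 = (\<lambda>i. if i < d 0 then x i else 0)"
| "layer_out \<sigma> d W x (Suc l) =
     (\<lambda>j. if j < d (Suc l)
          then \<sigma> (Suc l) (\<Sum>i<d l. layer_out \<sigma> d W x l i * W (Suc l) i j)
          else 0)"

definition net_out :: "(nat \<Rightarrow> real \<Rightarrow> real) \<Rightarrow> nat \<Rightarrow> (nat \<Rightarrow> nat) \<Rightarrow> weights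
                        \<Rightarrow> (nat \<Rightarrow> real) \<Rightarrow> real^'o::finite" where
  "net_out \<sigma> L d W x = (\<chi> k. layer_out \<sigma> d W x L (enum_idx k))"

text \<open>p-norm of row i of W_l (the fan-out of unit i of layer l-1).\<close>
definition row_pnorm :: "real \<Rightarrow> (nat \<Rightarrow> nat) \<Rightarrow> weights \<Rightarrow> nat \<Rightarrow> nat \<Rightarrow> real" where
  "row_pnorm p d W l i = (\<Sum>j<d l. \<bar>W l i j\<bar> powr p) powr (1 / p)"

definition Omega_out :: "real \<Rightarrow> real \<Rightarrow> nat \<Rightarrow> (nat \<Rightarrow> nat) \<Rightarrow> weights \<Rightarrow> real" where
  "Omega_out lam p L d W = lam * (\<Sum>l\<in>{1..L}. \<Sum>i<d (l - 1). row_pnorm p d W l i)"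

definition E_obj :: "(nat \<Rightarrow> real \<Rightarrow> real) \<Rightarrow> (real^'o::finite \<Rightarrow> 'y \<Rightarrow> real)
                      \<Rightarrow> ((nat \<Rightarrow> real) \<times> 'y) set \<Rightarrow> real \<Rightarrow> real \<Rightarrow> nat
                      \<Rightarrow> (nat \<Rightarrow> nat) \<Rightarrow> weights \<Rightarrow> real" where
  "E_obj \<sigma> e D lam p L d W =
     (\<Sum>(x, y)\<in>D. e (net_out \<sigma> L d W x) y) / real (card D) + Omega_out lam p L d W"

definition is_local_min :: "((nat \<Rightarrow> nat) \<Rightarrow> weights \<Rightarrow> real) \<Rightarrow> nat \<Rightarrow> (nat \<Rightarrow> nat)
                           \<Rightarrow> weights \<Rightarrow> bool" where
  "is_local_min E L d W \<longleftrightarrow> valid_weights L d W \<and>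
     (\<exists>\<epsilon>>0. \<forall>W'. valid_weights L d W' \<and> (\<forall>l i j. \<bar>W' l i j - W l i j\<bar> < \<epsilon>)
                 \<longrightarrow> E d W \<le> E d W')"

definition zero_fan_in :: "(nat \<Rightarrow> nat) \<Rightarrow> weights \<Rightarrow> nat \<Rightarrow> nat \<Rightarrow> bool" where
  "zero_fan_in d W l j \<longleftrightarrow> (\<forall>i<d (l - 1). W l i j = 0)"

definition zero_fan_out :: "(nat \<Rightarrow> nat) \<Rightarrow> weights \<Rightarrow> nat \<Rightarrow> nat \<Rightarrow> bool" where
  "zero_fan_out d W l j \<longleftrightarrow> (\<forall>k<d (l + 1). W (l + 1) j k = 0)"

definition proper_dim :: "nat \<Rightarrow> (nat \<Rightarrow> nat) \<Rightarrow> weights \<Rightarrow> nat \<Rightarrow> nat" where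
  "proper_dim L d W l =
     (if 1 \<le> l \<and> l \<le> L - 1
      then card {j. j < d l \<and> \<not> zero_fan_in d W l j \<and> \<not> zero_fan_out d W l j}
      else d l)"

definition is_proper :: "nat \<Rightarrow> (nat \<Rightarrow> nat) \<Rightarrow> weights \<Rightarrow> bool" where
  "is_proper L d W \<longleftrightarrow> (\<forall>l\<in>{0..L}. d l = proper_dim L d W l)"

definition proper_B_local_min :: "((nat \<Rightarrow> nat) \<Rightarrow> weights \<Rightarrow> real) \<Rightarrow> real \<Rightarrow> nat
                                  \<Rightarrow> (nat \<Rightarrow> nat) \<Rightarrow> weights \<Rightarrow> bool" where
  "proper_B_local_min E B L d W \<longleftrightarrow>
     is_local_min E L d W \<and> E d W \<le> B \<and> is_proper L d W"

end

theory Submission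
  imports Defs
begin

(* At a local minimum with E <= B the regulariser bounds the fan-in norms by R = B / lam, so the
   activations, and their sensitivities to weight changes, are bounded by constants that do not
   depend on the hidden widths. Scaling the fan-out of a hidden unit j by 1 + t changes Omega_out by
   exactly lam * t * |fan-out_j|_p, while the data term changes at rate at most
   C * |x_j| * |fan-out_j|_p <= C' * |fan-in_j|_1 * |fan-out_j|_p. In a proper network every fan-out
   is nonzero, so stationarity forces |fan-in_j|_1 >= lam / C' for each of the d_l units of layer l.
   Summing over them and applying the power mean inequality to the rows of W_l gives
   lam * d_l <= C' * d_l^(1 - 1/p) * R, i.e. d_l <= (C' * R / lam)^p. *)

lemma power_mean_le_pos:
  fixes y :: "'a \<Rightarrow> real"
  assumes A: "finite A" "A \<noteq> {}" and y: "\<And>i. i \<in> A \<Longrightarrow> 0 < y i" and p: "1 \<le> p"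
  shows "sum y A \<le> real (card A) powr (1 - 1/p) * (\<Sum>i\<in>A. y i powr p) powr (1/p)"
proof -
  define n where "n = real (card A)"
  have n: "0 < n" using A by (simp add: n_def card_gt_0_iff)
  have "(\<Sum>i\<in>A. (1/n) *\<^sub>R y i) powr p \<le> (\<Sum>i\<in>A. (1/n) * y i powr p)"
    by (rule convex_on_sum[OF A powr_convex[OF p]]) (use n y in \<open>auto simp: n_def\<close>)
  then have jensen: "(sum y A / n) powr p \<le> (\<Sum>i\<in>A. y i powr p) / n"
    by (simp add: sum_divide_distrib)
  have "sum y A / n = ((sum y A / n) powr p) powr (1/p)"
    using p n y by (simp add: powr_powr sum_nonneg less_imp_le)
  also have "\<dots> \<le> ((\<Sum>i\<in>A. y i powr p) / n) powr (1/p)"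
    using jensen p by (intro powr_mono2) auto
  also have "\<dots> = (\<Sum>i\<in>A. y i powr p) powr (1/p) / n powr (1/p)"
    using n by (simp add: powr_divide sum_nonneg)
  finally have "sum y A \<le> n / n powr (1/p) * (\<Sum>i\<in>A. y i powr p) powr (1/p)"
    using n by (simp add: field_simps)
  also have "n / n powr (1/p) = n powr (1 - 1/p)"
    using n by (simp add: powr_diff)
  finally show ?thesis by (simp add: n_def)
qed

lemma sum_le_card_powr_mult_sum_powr:
  fixes y :: "'a \<Rightarrow> real"
  assumes A: "finite A" and y: "\<And>i. i \<in> A \<Longrightarrow> 0 \<le> y i" and p: "1 \<le> p"
  shows "sum y A \<le> real (card A) powr (1 - 1/p) * (\<Sum>i\<in>A. y i powr p) powr (1/p)"
proof -
  define P where "P = {i\<in>A. y i \<noteq> 0}"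
  have P: "finite P" "P \<subseteq> A" using A by (auto simp: P_def)
  have sum_P: "sum y A = sum y P" "(\<Sum>i\<in>A. y i powr p) = (\<Sum>i\<in>P. y i powr p)"
    by (rule sum.mono_neutral_right; use A in \<open>auto simp: P_def\<close>)+
  show ?thesis
  proof (cases "P = {}")
    case False
    have "sum y P \<le> real (card P) powr (1 - 1/p) * (\<Sum>i\<in>P. y i powr p) powr (1/p)"
      by (rule power_mean_le_pos[OF P(1) False _ p]) (use y P in \<open>force simp: P_def\<close>)
    also have "\<dots> \<le> real (card A) powr (1 - 1/p) * (\<Sum>i\<in>P. y i powr p) powr (1/p)"
      using p card_mono[OF A P(2)] False P(1)
      by (intro mult_right_mono powr_mono2) (auto simp: card_gt_0_iff)
    finally show ?thesis by (simp add: sum_P)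
  qed (simp add: sum_P)
qed

lemma abs_sum_mult_le:
  fixes f g :: "'a \<Rightarrow> real"
  assumes "\<And>i. i \<in> A \<Longrightarrow> \<bar>f i\<bar> \<le> X" "0 \<le> X"
  shows "\<bar>\<Sum>i\<in>A. f i * g i\<bar> \<le> X * (\<Sum>i\<in>A. \<bar>g i\<bar>)"
proof -
  have "\<bar>\<Sum>i\<in>A. f i * g i\<bar> \<le> (\<Sum>i\<in>A. \<bar>f i\<bar> * \<bar>g i\<bar>)"
    by (rule order_trans[OF sum_abs]) (simp add: abs_mult)
  also have "\<dots> \<le> (\<Sum>i\<in>A. X * \<bar>g i\<bar>)"
    by (rule sum_mono, rule mult_right_mono) (use assms in auto)
  finally show ?thesis by (simp add: sum_distrib_left)
qed

lemma card_le_of_column_lower_bound: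
  fixes A :: "nat \<Rightarrow> nat \<Rightarrow> real"
  assumes p: "1 \<le> p" and lam: "0 < lam"
    and col: "\<And>j. j < n \<Longrightarrow> lam \<le> C * (\<Sum>i<m. \<bar>A i j\<bar>)"
    and rows: "(\<Sum>i<m. (\<Sum>j<n. \<bar>A i j\<bar> powr p) powr (1/p)) \<le> R"
  shows "real n \<le> (C * R / lam) powr p"
proof (cases "n = 0")
  case False
  have "0 \<le> (\<Sum>i<m. \<bar>A i 0\<bar>)" by (simp add: sum_nonneg)
  then have C: "0 < C"
    using col[of 0] False lam by (metis gr0I less_le_trans mult_nonpos_nonneg not_le)
  have "lam * real n = (\<Sum>j<n. lam)" by simp
  also have "\<dots> \<le> (\<Sum>j<n. C * (\<Sum>i<m. \<bar>A i j\<bar>))" by (rule sum_mono) (use col in auto)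
  also have "\<dots> = C * (\<Sum>i<m. \<Sum>j<n. \<bar>A i j\<bar>)"
    by (simp add: sum_distrib_left sum.swap[of _ "{..<n}"])
  also have "\<dots> \<le> C * (\<Sum>i<m. real n powr (1 - 1/p) * (\<Sum>j<n. \<bar>A i j\<bar> powr p) powr (1/p))"
    using sum_le_card_powr_mult_sum_powr[OF _ _ p, of "{..<n}"] C
    by (intro mult_left_mono[OF sum_mono]) auto
  also have "\<dots> = C * real n powr (1 - 1/p) * (\<Sum>i<m. (\<Sum>j<n. \<bar>A i j\<bar> powr p) powr (1/p))"
    by (simp add: sum_distrib_left mult.assoc)
  also have "\<dots> \<le> C * real n powr (1 - 1/p) * R"
    using C by (intro mult_left_mono[OF rows]) simp
  also have "\<dots> = C * R / real n powr (1/p) * real n"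
    using False by (simp add: powr_diff)
  finally have "real n powr (1/p) \<le> C * R / lam"
    using False lam by (simp add: field_simps)
  then have "(real n powr (1/p)) powr p \<le> (C * R / lam) powr p"
    using p by (intro powr_mono2) auto
  then show ?thesis using p False by (simp add: powr_powr)
qed simp

lemma stationary_average_le:
  fixes g :: "'a \<Rightarrow> real"
  assumes D: "finite D" "D \<noteq> {}" and stationary: "(\<Sum>q\<in>D. g q) / real (card D) + lam * \<rho> = 0"
    and \<rho>: "0 < \<rho>" and g: "\<And>q. q \<in> D \<Longrightarrow> \<bar>g q\<bar> \<le> A * \<rho>"
  shows "lam \<le> A"
proof -
  have card: "0 < real (card D)" using D by (simp add: card_gt_0_iff)
  have "lam * \<rho> = - (\<Sum>q\<in>D. g q) / real (card D)" using stationary by simp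
  also have "\<dots> \<le> (\<Sum>q\<in>D. \<bar>g q\<bar>) / real (card D)"
    using card by (intro divide_right_mono) (auto intro: order_trans[OF abs_ge_minus_self sum_abs])
  also have "\<dots> \<le> (\<Sum>q\<in>D. A * \<rho>) / real (card D)"
    using card g by (intro divide_right_mono sum_mono) auto
  also have "\<dots> = A * \<rho>" using card by simp
  finally show ?thesis using \<rho> by simp
qed

lemma vec_lambda_has_derivative:
  fixes g :: "'o::finite \<Rightarrow> real \<Rightarrow> real"
  assumes "\<And>k. (g k has_real_derivative u k) (at s)"
  shows "((\<lambda>t. \<chi> k. g k t) has_derivative (\<lambda>h. h *\<^sub>R (\<chi> k. u k))) (at s)"
proof -
  have "((\<lambda>t. (\<chi> k. g k t) \<bullet> axis i 1) has_derivative (\<lambda>h. h *\<^sub>R (\<chi> k. u k) \<bullet> axis i 1)) (at s)"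
    for i
    using assms[of i] by (simp add: inner_axis has_field_derivative_def mult_commute_abs)
  then show ?thesis
    by (subst has_derivative_componentwise_within) (auto simp: Basis_vec_def)
qed

lemma comp_vec_curve_has_derivative_bound:
  fixes g :: "'o::finite \<Rightarrow> real \<Rightarrow> real" and f :: "real^'o \<Rightarrow> real"
  assumes g: "\<And>k. (g k has_real_derivative u k) (at s)" and u: "\<And>k. \<bar>u k\<bar> \<le> U"
    and f: "f differentiable (at (\<chi> k. g k s))"
    and partial: "\<And>k. \<bar>frechet_derivative f (at (\<chi> k. g k s)) (axis k 1)\<bar> \<le> c"
  shows "\<exists>D'. ((\<lambda>t. f (\<chi> k. g k t)) has_real_derivative D') (at s)
              \<and> \<bar>D'\<bar> \<le> real CARD('o) * c * U"
proof (intro exI conjI)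
  define F where "F = frechet_derivative f (at (\<chi> k. g k s))"
  define V :: "real^'o" where "V = (\<chi> k. u k)"
  have lin: "linear F" using f by (simp add: F_def linear_frechet_derivative)
  have "(f \<circ> (\<lambda>t. \<chi> k. g k t) has_derivative F \<circ> (\<lambda>h. h *\<^sub>R V)) (at s)"
    using vec_lambda_has_derivative[OF g] f
    by (intro diff_chain_at) (simp_all add: V_def F_def frechet_derivative_works)
  moreover have "F \<circ> (\<lambda>h. h *\<^sub>R V) = (*) (F V)"
    using lin by (auto simp: linear_scale mult.commute)
  ultimately show "((\<lambda>t. f (\<chi> k. g k t)) has_real_derivative F V) (at s)"
    by (simp add: has_field_derivative_def o_def)
  have "F V = F (\<Sum>k\<in>UNIV. u k *\<^sub>R axis k 1)"
    using basis_expansion[of V] by (simp add: V_def scalar_mult_eq_scaleR)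
  also have "\<dots> = (\<Sum>k\<in>UNIV. u k * F (axis k 1))"
    using lin by (simp add: linear_sum linear_scale)
  also have "\<bar>\<dots>\<bar> \<le> U * (\<Sum>k\<in>UNIV. \<bar>F (axis k 1)\<bar>)"
    using u order_trans[OF abs_ge_zero u] by (intro abs_sum_mult_le) auto
  also have "\<dots> \<le> U * (\<Sum>k\<in>(UNIV::'o set). c)"
    using partial order_trans[OF abs_ge_zero u] by (intro mult_left_mono sum_mono) (auto simp: F_def)
  finally show "\<bar>F V\<bar> \<le> real CARD('o) * c * U" by (simp add: mult.commute)
qed

definition perturb :: "weights \<Rightarrow> real \<Rightarrow> weights \<Rightarrow> weights" where
  "perturb W t V = (\<lambda>l i j. W l i j + t * V l i j)"

definition fan_out_dir :: "weights \<Rightarrow> nat \<Rightarrow> nat \<Rightarrow> weights" where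
  "fan_out_dir W l j = (\<lambda>m i k. if m = Suc l \<and> i = j then W m i k else 0)"

lemma perturb_0 [simp]: "perturb W 0 V = W"
  by (simp add: perturb_def)

lemma abs_le_row_pnorm:
  assumes "valid_weights L d W" and "1 \<le> p"
  shows "\<bar>W m i k\<bar> \<le> row_pnorm p d W m i"
proof (cases "W m i k = 0")
  case False
  then have k: "k < d m" using assms(1) by (auto simp: valid_weights_def)
  have "\<bar>W m i k\<bar> = (\<bar>W m i k\<bar> powr p) powr (1/p)" using assms(2) by (simp add: powr_powr)
  also have "\<dots> \<le> row_pnorm p d W m i" unfolding row_pnorm_def
    by (intro powr_mono2 member_le_sum) (use assms(2) k in auto)
  finally show ?thesis .
qed (simp add: row_pnorm_def)

lemma row_pnorm_perturb_fan_out: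
  assumes "0 < 1 + t" and "1 \<le> p"
  shows "row_pnorm p d (perturb W t (fan_out_dir W l j)) m i
         = (if m = Suc l \<and> i = j then (1 + t) * row_pnorm p d W m i else row_pnorm p d W m i)"
proof (cases "m = Suc l \<and> i = j")
  case True
  have "\<bar>perturb W t (fan_out_dir W l j) m i k\<bar> powr p = (1 + t) powr p * \<bar>W m i k\<bar> powr p" for k
  proof -
    have "perturb W t (fan_out_dir W l j) m i k = (1 + t) * W m i k"
      using True by (simp add: perturb_def fan_out_dir_def algebra_simps)
    then show ?thesis using assms(1) by (simp add: abs_mult powr_mult)
  qed
  then have "row_pnorm p d (perturb W t (fan_out_dir W l j)) m i
             = ((1 + t) powr p) powr (1/p) * row_pnorm p d W m i"
    by (simp add: row_pnorm_def sum_distrib_left[symmetric] powr_mult sum_nonneg)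
  also have "((1 + t) powr p) powr (1/p) = 1 + t" using assms by (simp add: powr_powr)
  finally show ?thesis using True by simp
qed (auto simp: row_pnorm_def perturb_def fan_out_dir_def)

lemma Omega_out_perturb_fan_out:
  assumes "0 < 1 + t" and "1 \<le> p" and "Suc l \<in> {1..L}" and "j < d l"
  shows "Omega_out lam p L d (perturb W t (fan_out_dir W l j))
       = Omega_out lam p L d W + lam * t * row_pnorm p d W (Suc l) j"
proof -
  have delta: "(\<Sum>m\<in>{1..L}. \<Sum>i<d (m - 1). if m = Suc l \<and> i = j then t * row_pnorm p d W m i else 0)
      = t * row_pnorm p d W (Suc l) j"
  proof -
    have "(\<Sum>m\<in>{1..L}. \<Sum>i<d (m - 1). if m = Suc l \<and> i = j then t * row_pnorm p d W m i else 0)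
        = (\<Sum>m\<in>{1..L}. if m = Suc l then t * row_pnorm p d W (Suc l) j else 0)"
      using assms(4) by (intro sum.cong) (auto simp: sum.delta if_distrib cong: if_cong)
    also have "\<dots> = t * row_pnorm p d W (Suc l) j" using assms(3) by simp
    finally show ?thesis .
  qed
  have "(\<Sum>m\<in>{1..L}. \<Sum>i<d (m - 1). row_pnorm p d (perturb W t (fan_out_dir W l j)) m i)
      = (\<Sum>m\<in>{1..L}. \<Sum>i<d (m - 1). row_pnorm p d W m i
          + (if m = Suc l \<and> i = j then t * row_pnorm p d W m i else 0))"
    using assms(1,2) by (intro sum.cong refl) (simp add: row_pnorm_perturb_fan_out algebra_simps)
  also have "\<dots> = (\<Sum>m\<in>{1..L}. \<Sum>i<d (m - 1). row_pnorm p d W m i) + t * row_pnorm p d W (Suc l) j"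
    by (simp only: sum.distrib delta)
  finally show ?thesis unfolding Omega_out_def by (simp add: algebra_simps)
qed

lemma is_local_min_along_direction:
  assumes lm: "is_local_min E L d W" and V: "valid_weights L d V"
    and M: "\<And>m i k. \<bar>V m i k\<bar> \<le> M"
  shows "\<exists>\<delta>>0. \<forall>t. \<bar>t\<bar> < \<delta> \<longrightarrow> E d W \<le> E d (perturb W t V)"
proof -
  obtain \<epsilon> where \<epsilon>: "0 < \<epsilon>" and min: "\<And>W'. valid_weights L d W' \<Longrightarrow>
      (\<forall>l i j. \<bar>W' l i j - W l i j\<bar> < \<epsilon>) \<Longrightarrow> E d W \<le> E d W'"
    using lm unfolding is_local_min_def by blast
  have W: "valid_weights L d W" using lm by (simp add: is_local_min_def)
  have M0: "0 \<le> M" using M[of 0 0 0] by linarith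
  have "E d W \<le> E d (perturb W t V)" if t: "\<bar>t\<bar> < \<epsilon> / (M + 1)" for t
  proof (rule min)
    show "valid_weights L d (perturb W t V)"
      unfolding valid_weights_def
    proof (intro allI impI)
      fix l i j assume "perturb W t V l i j \<noteq> 0"
      then have "W l i j \<noteq> 0 \<or> V l i j \<noteq> 0" by (auto simp: perturb_def)
      then show "1 \<le> l \<and> l \<le> L \<and> i < d (l - 1) \<and> j < d l"
        using W V unfolding valid_weights_def by blast
    qed
    have "\<bar>t\<bar> * \<bar>V l i j\<bar> < \<epsilon>" for l i j
    proof -
      have "\<bar>t\<bar> * \<bar>V l i j\<bar> \<le> \<bar>t\<bar> * (M + 1)" using M[of l i j] by (intro mult_left_mono) auto
      also have "\<dots> < \<epsilon>" using t M0 by (simp add: field_simps)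
      finally show ?thesis .
    qed
    then show "\<forall>l i j. \<bar>perturb W t V l i j - W l i j\<bar> < \<epsilon>"
      by (simp add: perturb_def abs_mult)
  qed
  then show ?thesis using \<epsilon> M0 by (intro exI[of _ "\<epsilon> / (M + 1)"]) auto
qed

(* The regulariser contributes exactly lam times the fan-out norm, since row_pnorm is positively
   homogeneous. *)
lemma E_obj_fan_out_stationary:
  assumes lm: "is_local_min (E_obj \<sigma> e D lam p L) L d W" and p: "1 \<le> p"
    and l: "Suc l \<in> {1..L}" and j: "j < d l"
    and Dq: "\<And>q. q \<in> D \<Longrightarrow> ((\<lambda>t. e (net_out \<sigma> L d (perturb W t (fan_out_dir W l j)) (fst q)) (snd q))
                                has_real_derivative Dq q) (at 0)"
  shows "(\<Sum>q\<in>D. Dq q) / real (card D) + lam * row_pnorm p d W (Suc l) j = 0"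
proof -
  let ?V = "fan_out_dir W l j" and ?\<rho> = "row_pnorm p d W (Suc l) j"
  define \<psi> where "\<psi> t = (\<Sum>q\<in>D. e (net_out \<sigma> L d (perturb W t ?V) (fst q)) (snd q)) / real (card D)
                        + Omega_out lam p L d W + lam * ?\<rho> * t" for t
  have "((\<lambda>t. \<Sum>q\<in>D. e (net_out \<sigma> L d (perturb W t ?V) (fst q)) (snd q))
         has_real_derivative (\<Sum>q\<in>D. Dq q)) (at 0)"
    by (rule DERIV_sum) (rule Dq)
  from DERIV_add[OF DERIV_add[OF DERIV_cdivide[OF this, of "real (card D)"]
      DERIV_const[of "Omega_out lam p L d W"]] DERIV_cmult[OF DERIV_ident, of "lam * ?\<rho>"]]
  have deriv: "(\<psi> has_real_derivative (\<Sum>q\<in>D. Dq q) / real (card D) + lam * ?\<rho>) (at 0)"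
    unfolding \<psi>_def by simp
  have E_eq: "E_obj \<sigma> e D lam p L d (perturb W t ?V) = \<psi> t" if "\<bar>t\<bar> < 1" for t
  proof -
    have "0 < 1 + t" using that by simp
    from Omega_out_perturb_fan_out[where d = d and l = l and lam = lam and W = W, OF this p l j]
    show ?thesis
      by (simp add: E_obj_def \<psi>_def case_prod_beta' mult_ac)
  qed
  obtain \<delta> where \<delta>: "0 < \<delta>"
    and min: "\<And>t. \<bar>t\<bar> < \<delta> \<Longrightarrow> E_obj \<sigma> e D lam p L d W \<le> E_obj \<sigma> e D lam p L d (perturb W t ?V)"
  proof -
    have W: "valid_weights L d W" using lm by (simp add: is_local_min_def)
    then have "valid_weights L d ?V" by (fastforce simp: valid_weights_def fan_out_dir_def)
    moreover have "\<bar>?V m i k\<bar> \<le> ?\<rho>" for m i k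
      using abs_le_row_pnorm[OF W p] by (simp add: fan_out_dir_def row_pnorm_def)
    ultimately show ?thesis using is_local_min_along_direction[OF lm] that by blast
  qed
  have "\<psi> 0 \<le> \<psi> t" if "\<bar>0 - t\<bar> < min 1 \<delta>" for t
    using E_eq[of 0] E_eq[of t] min[of t] that by simp
  then show ?thesis using \<delta> by (intro DERIV_local_min[OF deriv, of "min 1 \<delta>"]) auto
qed

lemma E_obj_le_imp_row_pnorm_sum_le:
  assumes E: "E_obj \<sigma> e D lam p L d W \<le> B" and e: "\<And>v y. 0 \<le> e v y" and lam: "0 < lam"
    and m: "m \<in> {1..L}"
  shows "(\<Sum>i<d (m - 1). row_pnorm p d W m i) \<le> B / lam"
proof -
  have "0 \<le> (\<Sum>(x, y)\<in>D. e (net_out \<sigma> L d W x) y) / real (card D)"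
    using e by (intro divide_nonneg_nonneg sum_nonneg) (auto split: prod.split)
  then have "lam * (\<Sum>m\<in>{1..L}. \<Sum>i<d (m - 1). row_pnorm p d W m i) \<le> B"
    using E unfolding E_obj_def Omega_out_def by linarith
  moreover have "(\<Sum>i<d (m - 1). row_pnorm p d W m i) \<le> (\<Sum>m\<in>{1..L}. \<Sum>i<d (m - 1). row_pnorm p d W m i)"
    using m by (intro member_le_sum sum_nonneg) (auto simp: row_pnorm_def)
  ultimately have "lam * (\<Sum>i<d (m - 1). row_pnorm p d W m i) \<le> B"
    using lam by (meson mult_left_mono less_imp_le order_trans)
  then show ?thesis using lam by (simp add: pos_le_divide_eq mult.commute)
qed

lemma E_obj_le_imp_loss_le:
  assumes E: "E_obj \<sigma> e D lam p L d W \<le> B" and e: "\<And>v y. 0 \<le> e v y" and lam: "0 < lam"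
    and D: "finite D" and q: "q \<in> D"
  shows "e (net_out \<sigma> L d W (fst q)) (snd q) \<le> real (card D) * B"
proof -
  have card: "0 < real (card D)" using D q by (auto simp: card_gt_0_iff)
  have "0 \<le> Omega_out lam p L d W"
    unfolding Omega_out_def using lam by (intro mult_nonneg_nonneg sum_nonneg) (auto simp: row_pnorm_def)
  then have "(\<Sum>(x, y)\<in>D. e (net_out \<sigma> L d W x) y) / real (card D) \<le> B"
    using E unfolding E_obj_def by linarith
  then have "(\<Sum>(x, y)\<in>D. e (net_out \<sigma> L d W x) y) \<le> real (card D) * B"
    using card by (simp add: divide_le_eq mult.commute)
  moreover have "e (net_out \<sigma> L d W (fst q)) (snd q) \<le> (\<Sum>(x, y)\<in>D. e (net_out \<sigma> L d W x) y)"
    using member_le_sum[OF q, of "\<lambda>(x, y). e (net_out \<sigma> L d W x) y"] D e by (simp add: case_prod_beta')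
  ultimately show ?thesis by linarith
qed

lemma proper_imp_row_pnorm_fan_out_pos:
  assumes "is_proper L d W" and l: "l \<in> {1..L - 1}" and j: "j < d l"
  shows "0 < row_pnorm p d W (Suc l) j"
proof -
  have "d l = proper_dim L d W l" using assms(1) l unfolding is_proper_def by auto
  then have "card {j. j < d l \<and> \<not> zero_fan_in d W l j \<and> \<not> zero_fan_out d W l j} = card {..<d l}"
    using l by (simp add: proper_dim_def)
  then have "{j. j < d l \<and> \<not> zero_fan_in d W l j \<and> \<not> zero_fan_out d W l j} = {..<d l}"
    by (intro card_subset_eq) auto
  then obtain k where "k < d (Suc l)" and "W (Suc l) j k \<noteq> 0"
    using j by (auto simp: zero_fan_out_def)
  then have "0 < (\<Sum>k<d (Suc l). \<bar>W (Suc l) j k\<bar> powr p)"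
    by (intro sum_pos2[of _ k]) auto
  then show ?thesis by (simp add: row_pnorm_def)
qed

(* act_bound b1 X0 R m bounds the activations of layer m when the inputs are bounded by X0 and every
   fan-in has l1-norm at most R; given the activation bounds X, sens_bound b2 X R m bounds the
   derivative of layer m along a weight direction that moves every preactivation at rate at most 1. *)
fun act_bound :: "(nat \<Rightarrow> real \<Rightarrow> real) \<Rightarrow> real \<Rightarrow> real \<Rightarrow> nat \<Rightarrow> real" where
  "act_bound b1 X0 R 0 = X0"
| "act_bound b1 X0 R (Suc m) = b1 (Suc m) (act_bound b1 X0 R m * R) * (act_bound b1 X0 R m * R)"

fun sens_bound :: "(nat \<Rightarrow> real \<Rightarrow> real) \<Rightarrow> (nat \<Rightarrow> real) \<Rightarrow> real \<Rightarrow> nat \<Rightarrow> real" where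
  "sens_bound b2 X R 0 = 0"
| "sens_bound b2 X R (Suc m) = b2 (Suc m) (X m * R) * (sens_bound b2 X R m * R + 1)"

locale activation_bounds =
  fixes L :: nat and \<sigma> b1 b2 :: "nat \<Rightarrow> real \<Rightarrow> real"
  assumes sigma_differentiable: "\<And>l s. l \<in> {1..L} \<Longrightarrow> \<sigma> l differentiable (at s)"
    and b1_nonneg: "\<And>l S. l \<in> {1..L} \<Longrightarrow> 0 \<le> S \<Longrightarrow> 0 \<le> b1 l S"
    and b2_nonneg: "\<And>l S. l \<in> {1..L} \<Longrightarrow> 0 \<le> S \<Longrightarrow> 0 \<le> b2 l S"
    and abs_sigma_le: "\<And>l S s. l \<in> {1..L} \<Longrightarrow> \<bar>s\<bar> \<le> S \<Longrightarrow> \<bar>\<sigma> l s\<bar> \<le> b1 l S * \<bar>s\<bar>"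
    and abs_deriv_sigma_le: "\<And>l S s. l \<in> {1..L} \<Longrightarrow> \<bar>s\<bar> \<le> S \<Longrightarrow> \<bar>deriv (\<sigma> l) s\<bar> \<le> b2 l S"
begin

lemma layer_out_Suc_bound:
  assumes m: "Suc m \<le> L" and Y: "\<And>i. \<bar>layer_out \<sigma> d W x m i\<bar> \<le> Y"
    and fan_in: "(\<Sum>i<d m. \<bar>W (Suc m) i k\<bar>) \<le> R"
  shows "\<bar>layer_out \<sigma> d W x (Suc m) k\<bar> \<le> b1 (Suc m) (Y * R) * (Y * (\<Sum>i<d m. \<bar>W (Suc m) i k\<bar>))"
proof -
  define z where "z = (\<Sum>i<d m. layer_out \<sigma> d W x m i * W (Suc m) i k)"
  have Y0: "0 \<le> Y" using Y[of 0] by linarith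
  have z: "\<bar>z\<bar> \<le> Y * (\<Sum>i<d m. \<bar>W (Suc m) i k\<bar>)"
    unfolding z_def using Y Y0 by (rule abs_sum_mult_le)
  also have "\<dots> \<le> Y * R" using fan_in Y0 by (rule mult_left_mono)
  finally have zR: "\<bar>z\<bar> \<le> Y * R" .
  have b1: "0 \<le> b1 (Suc m) (Y * R)" using m zR by (intro b1_nonneg) auto
  show ?thesis
  proof (cases "k < d (Suc m)")
    case True
    have "\<bar>\<sigma> (Suc m) z\<bar> \<le> b1 (Suc m) (Y * R) * \<bar>z\<bar>" using m zR by (intro abs_sigma_le) auto
    also have "\<dots> \<le> b1 (Suc m) (Y * R) * (Y * (\<Sum>i<d m. \<bar>W (Suc m) i k\<bar>))" by (rule mult_left_mono[OF z b1])
    finally show ?thesis using True by (simp add: z_def)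
  qed (use b1 Y0 in \<open>simp add: sum_nonneg\<close>)
qed

lemma layer_out_bound:
  assumes x: "\<And>i. i < d 0 \<Longrightarrow> \<bar>x i\<bar> \<le> X0" and X0: "0 \<le> X0"
    and fan_in: "\<And>m k. m \<in> {1..L} \<Longrightarrow> (\<Sum>i<d (m - 1). \<bar>W m i k\<bar>) \<le> R"
  shows "m \<le> L \<Longrightarrow> \<bar>layer_out \<sigma> d W x m i\<bar> \<le> act_bound b1 X0 R m"
proof (induction m arbitrary: i)
  case 0
  then show ?case using x X0 by simp
next
  case (Suc m)
  let ?Y = "act_bound b1 X0 R m"
  have Y: "\<And>i. \<bar>layer_out \<sigma> d W x m i\<bar> \<le> ?Y" using Suc by simp
  have Y0: "0 \<le> ?Y" using Y[of 0] by linarith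
  have fan: "(\<Sum>i'<d m. \<bar>W (Suc m) i' i\<bar>) \<le> R" using fan_in[of "Suc m" i] Suc.prems by simp
  have R0: "0 \<le> R" using fan sum_nonneg[of _ "\<lambda>i'. \<bar>W (Suc m) i' i\<bar>"] by (meson abs_ge_zero order_trans)
  have "\<bar>layer_out \<sigma> d W x (Suc m) i\<bar> \<le> b1 (Suc m) (?Y * R) * (?Y * (\<Sum>i'<d m. \<bar>W (Suc m) i' i\<bar>))"
    by (rule layer_out_Suc_bound[OF Suc.prems Y fan])
  also have "\<dots> \<le> b1 (Suc m) (?Y * R) * (?Y * R)"
    using Suc.prems fan Y0 R0 by (intro mult_left_mono b1_nonneg) auto
  finally show ?case by simp
qed

lemma act_bound_nonneg:
  fixes d :: "nat \<Rightarrow> nat" and W :: weights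
  assumes "0 \<le> X0" and "\<And>m k. m \<in> {1..L} \<Longrightarrow> (\<Sum>i<d (m - 1). \<bar>W m i k\<bar>) \<le> R" and "m \<le> L"
  shows "0 \<le> act_bound b1 X0 R m"
proof -
  have "\<bar>layer_out \<sigma> d W (\<lambda>_. 0) m 0\<bar> \<le> act_bound b1 X0 R m"
    by (rule layer_out_bound) (use assms in auto)
  then show ?thesis by linarith
qed

lemma sens_bound_nonneg:
  assumes "0 \<le> R" and "\<And>m. m \<le> L \<Longrightarrow> 0 \<le> X m"
  shows "m \<le> L \<Longrightarrow> 0 \<le> sens_bound b2 X R m"
proof (induction m)
  case (Suc m)
  then show ?case using assms b2_nonneg[of "Suc m" "X m * R"] by simp
qed simp

lemma layer_out_perturb_Suc_has_derivative:
  assumes m: "Suc m \<le> L"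
    and u: "\<And>i. ((\<lambda>t. layer_out \<sigma> d (perturb W t V) x m i) has_real_derivative u i) (at 0)"
    and U: "\<And>i. \<bar>u i\<bar> \<le> U"
    and Y: "\<And>i. \<bar>layer_out \<sigma> d W x m i\<bar> \<le> Y"
    and fan_in: "(\<Sum>i<d m. \<bar>W (Suc m) i k\<bar>) \<le> R"
    and pert: "\<bar>\<Sum>i<d m. layer_out \<sigma> d W x m i * V (Suc m) i k\<bar> \<le> a"
  shows "\<exists>v. ((\<lambda>t. layer_out \<sigma> d (perturb W t V) x (Suc m) k) has_real_derivative v) (at 0)
             \<and> \<bar>v\<bar> \<le> b2 (Suc m) (Y * R) * (U * R + a)"
proof -
  have Y0: "0 \<le> Y" using Y[of 0] by linarith
  have U0: "0 \<le> U" using U[of 0] by linarith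
  have "0 \<le> (\<Sum>i<d m. \<bar>W (Suc m) i k\<bar>)" by (simp add: sum_nonneg)
  then have R0: "0 \<le> R" using fan_in by linarith
  have b2: "0 \<le> b2 (Suc m) (Y * R)" using m Y0 R0 by (intro b2_nonneg) auto
  show ?thesis
  proof (cases "k < d (Suc m)")
    case False
    then show ?thesis using b2 U0 R0 pert by (intro exI[of _ 0]) auto
  next
    case True
    define z where "z t = (\<Sum>i<d m. layer_out \<sigma> d (perturb W t V) x m i
                                     * (W (Suc m) i k + t * V (Suc m) i k))" for t
    define dz where "dz = (\<Sum>i<d m. u i * W (Suc m) i k + layer_out \<sigma> d W x m i * V (Suc m) i k)"
    have "(z has_real_derivative dz) (at 0)"
      unfolding z_def dz_def by (auto intro!: derivative_eq_intros u simp: mult.commute)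
    then have "((\<lambda>t. \<sigma> (Suc m) (z t)) has_real_derivative deriv (\<sigma> (Suc m)) (z 0) * dz) (at 0)"
      using sigma_differentiable[of "Suc m"] m
      by (intro DERIV_chain2) (auto simp: DERIV_deriv_iff_real_differentiable)
    moreover have "(\<lambda>t. layer_out \<sigma> d (perturb W t V) x (Suc m) k) = (\<lambda>t. \<sigma> (Suc m) (z t))"
      using True by (simp add: z_def perturb_def)
    moreover have "\<bar>deriv (\<sigma> (Suc m)) (z 0)\<bar> \<le> b2 (Suc m) (Y * R)"
    proof (rule abs_deriv_sigma_le)
      have "\<bar>z 0\<bar> \<le> Y * (\<Sum>i<d m. \<bar>W (Suc m) i k\<bar>)"
        unfolding z_def using Y Y0 by (simp add: abs_sum_mult_le)
      also have "\<dots> \<le> Y * R" using fan_in Y0 by (rule mult_left_mono)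
      finally show "\<bar>z 0\<bar> \<le> Y * R" .
    qed (use m in auto)
    moreover have "\<bar>dz\<bar> \<le> U * R + a"
    proof -
      have "\<bar>\<Sum>i<d m. u i * W (Suc m) i k\<bar> \<le> U * R"
        using abs_sum_mult_le[of "{..<d m}" u U, OF U U0] fan_in U0
        by (meson mult_left_mono order_trans)
      then show ?thesis using pert by (simp add: dz_def sum.distrib)
    qed
    ultimately show ?thesis
      using b2 by (intro exI[of _ "deriv (\<sigma> (Suc m)) (z 0) * dz"]) (auto simp: abs_mult intro: mult_mono)
  qed
qed

lemma layer_out_perturb_has_derivative:
  assumes X: "\<And>m i. m \<le> L \<Longrightarrow> \<bar>layer_out \<sigma> d W x m i\<bar> \<le> X m"
    and fan_in: "\<And>m k. m \<in> {1..L} \<Longrightarrow> (\<Sum>i<d (m - 1). \<bar>W m i k\<bar>) \<le> R"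
    and pert: "\<And>m k. m \<in> {1..L} \<Longrightarrow> \<bar>\<Sum>i<d (m - 1). layer_out \<sigma> d W x (m - 1) i * V m i k\<bar> \<le> a"
  shows "m \<le> L \<Longrightarrow> \<exists>u. ((\<lambda>t. layer_out \<sigma> d (perturb W t V) x m i) has_real_derivative u) (at 0)
                        \<and> \<bar>u\<bar> \<le> a * sens_bound b2 X R m"
proof (induction m arbitrary: i)
  case 0
  show ?case by (intro exI[of _ 0]) simp
next
  case (Suc m)
  then have "\<forall>i. \<exists>u. ((\<lambda>t. layer_out \<sigma> d (perturb W t V) x m i) has_real_derivative u) (at 0)
                      \<and> \<bar>u\<bar> \<le> a * sens_bound b2 X R m"
    by simp
  then obtain u where "\<And>i. ((\<lambda>t. layer_out \<sigma> d (perturb W t V) x m i) has_real_derivative u i) (at 0)"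
    and "\<And>i. \<bar>u i\<bar> \<le> a * sens_bound b2 X R m"
    by metis
  from layer_out_perturb_Suc_has_derivative[OF Suc.prems this X] Suc.prems fan_in[of "Suc m"] pert[of "Suc m"]
  show ?case by (simp add: algebra_simps)
qed

lemma loss_perturb_fan_out_has_derivative:
  fixes f :: "real^'o::finite \<Rightarrow> real"
  assumes X: "\<And>m i. m \<le> L \<Longrightarrow> \<bar>layer_out \<sigma> d W x m i\<bar> \<le> X m"
    and fan_in: "\<And>m k. m \<in> {1..L} \<Longrightarrow> (\<Sum>i<d (m - 1). \<bar>W m i k\<bar>) \<le> R"
    and j: "j < d l" and \<rho>: "\<And>k. \<bar>W (Suc l) j k\<bar> \<le> \<rho>"
    and f: "f differentiable (at (net_out \<sigma> L d W x))"
    and partial: "\<And>k. \<bar>frechet_derivative f (at (net_out \<sigma> L d W x)) (axis k 1)\<bar> \<le> c"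
  shows "\<exists>D'. ((\<lambda>t. f (net_out \<sigma> L d (perturb W t (fan_out_dir W l j)) x)) has_real_derivative D') (at 0)
              \<and> \<bar>D'\<bar> \<le> real CARD('o) * c * (\<bar>layer_out \<sigma> d W x l j\<bar> * \<rho> * sens_bound b2 X R L)"
proof -
  let ?a = "\<bar>layer_out \<sigma> d W x l j\<bar> * \<rho>"
  have pert: "\<bar>\<Sum>i<d (m - 1). layer_out \<sigma> d W x (m - 1) i * fan_out_dir W l j m i k\<bar> \<le> ?a" for m k
  proof (cases "m = Suc l")
    case True
    then have "(\<Sum>i<d (m - 1). layer_out \<sigma> d W x (m - 1) i * fan_out_dir W l j m i k)
               = layer_out \<sigma> d W x l j * W (Suc l) j k"
      using j by (simp add: fan_out_dir_def if_distrib sum.delta cong: if_cong)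
    then show ?thesis using \<rho>[of k] by (simp add: abs_mult mult_left_mono)
  qed (use \<rho>[of 0] in \<open>simp add: fan_out_dir_def\<close>)
  have "\<forall>k. \<exists>u. ((\<lambda>t. layer_out \<sigma> d (perturb W t (fan_out_dir W l j)) x L k) has_real_derivative u) (at 0)
                \<and> \<bar>u\<bar> \<le> ?a * sens_bound b2 X R L"
    using layer_out_perturb_has_derivative[where V = "fan_out_dir W l j", OF X fan_in pert] by blast
  then obtain u where u: "\<And>k. ((\<lambda>t. layer_out \<sigma> d (perturb W t (fan_out_dir W l j)) x L k)
                                  has_real_derivative u k) (at 0)"
    and U: "\<And>k. \<bar>u k\<bar> \<le> ?a * sens_bound b2 X R L"
    by metis
  show ?thesis unfolding net_out_def
    by (rule comp_vec_curve_has_derivative_bound[where u = "\<lambda>k. u (enum_idx k)", OF u U])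
      (use f partial in \<open>simp_all add: net_out_def\<close>)
qed

lemma local_min_fan_in_lower_bound:
  fixes e :: "real^'o::finite \<Rightarrow> 'y \<Rightarrow> real"
  assumes lm: "is_local_min (E_obj \<sigma> e D lam p L) L d W" and D: "finite D"
    and lam: "0 < lam" and p: "1 \<le> p"
    and x: "\<And>q i. q \<in> D \<Longrightarrow> i < d 0 \<Longrightarrow> \<bar>fst q i\<bar> \<le> X0" and X0: "0 \<le> X0"
    and fan_in: "\<And>m k. m \<in> {1..L} \<Longrightarrow> (\<Sum>i<d (m - 1). \<bar>W m i k\<bar>) \<le> R"
    and e: "\<And>v y. (\<lambda>w. e w y) differentiable (at v)"
    and partial: "\<And>q k. q \<in> D \<Longrightarrow>
      \<bar>frechet_derivative (\<lambda>w. e w (snd q)) (at (net_out \<sigma> L d W (fst q))) (axis k 1)\<bar> \<le> c"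
    and l: "l \<in> {1..L - 1}" and j: "j < d l" and fan_out: "0 < row_pnorm p d W (Suc l) j"
  defines "X \<equiv> act_bound b1 X0 R"
  shows "lam \<le> real CARD('o) * c * sens_bound b2 X R L
               * b1 l (X (l - 1) * R) * X (l - 1) * (\<Sum>i<d (l - 1). \<bar>W l i j\<bar>)"
proof -
  define \<rho> where "\<rho> = row_pnorm p d W (Suc l) j"
  define K where "K = sens_bound b2 X R L"
  obtain l' where l': "l = Suc l'" using l by (cases l) auto
  have valid: "valid_weights L d W" using lm by (simp add: is_local_min_def)
  have "0 \<le> (\<Sum>i<d (1 - 1). \<bar>W 1 i 0\<bar>)" by (simp add: sum_nonneg)
  also have "\<dots> \<le> R" using l by (intro fan_in) auto
  finally have "0 \<le> R" .
  then have K0: "0 \<le> K"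
    unfolding K_def X_def using act_bound_nonneg[where d = d and W = W, OF X0 fan_in]
    by (intro sens_bound_nonneg) auto
  have X: "\<And>q m i. q \<in> D \<Longrightarrow> m \<le> L \<Longrightarrow> \<bar>layer_out \<sigma> d W (fst q) m i\<bar> \<le> X m"
    unfolding X_def using x X0 fan_in by (intro layer_out_bound) auto
  have "\<exists>D'. ((\<lambda>t. e (net_out \<sigma> L d (perturb W t (fan_out_dir W l j)) (fst q)) (snd q))
                      has_real_derivative D') (at 0)
            \<and> \<bar>D'\<bar> \<le> real CARD('o) * c * (\<bar>layer_out \<sigma> d W (fst q) l j\<bar> * \<rho> * K)" if q: "q \<in> D" for q
    unfolding \<rho>_def K_def
    by (rule loss_perturb_fan_out_has_derivative[OF X[OF q] fan_in j abs_le_row_pnorm[OF valid p]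
          e partial[OF q]])
  then obtain Dq where Dq: "\<And>q. q \<in> D \<Longrightarrow> ((\<lambda>t. e (net_out \<sigma> L d (perturb W t (fan_out_dir W l j))
                                 (fst q)) (snd q)) has_real_derivative Dq q) (at 0)"
    and Dq_le: "\<And>q. q \<in> D \<Longrightarrow> \<bar>Dq q\<bar> \<le> real CARD('o) * c * (\<bar>layer_out \<sigma> d W (fst q) l j\<bar> * \<rho> * K)"
    by metis
  have stationary: "(\<Sum>q\<in>D. Dq q) / real (card D) + lam * \<rho> = 0"
    unfolding \<rho>_def using l j by (intro E_obj_fan_out_stationary[OF lm p _ _ Dq]) auto
  then have "D \<noteq> {}" using lam fan_out by (auto simp: \<rho>_def)
  then have c: "0 \<le> c" using partial by (meson abs_ge_zero all_not_in_conv order_trans)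
  show ?thesis
  proof (rule stationary_average_le[OF D \<open>D \<noteq> {}\<close> stationary])
    fix q assume q: "q \<in> D"
    have "\<bar>layer_out \<sigma> d W (fst q) l j\<bar> \<le> b1 l (X l' * R) * (X l' * (\<Sum>i<d l'. \<bar>W l i j\<bar>))"
      unfolding l' using l l' X[OF q] fan_in[of l j] by (intro layer_out_Suc_bound) auto
    then have "real CARD('o) * c * (\<bar>layer_out \<sigma> d W (fst q) l j\<bar> * \<rho> * K)
               \<le> real CARD('o) * c * (b1 l (X l' * R) * (X l' * (\<Sum>i<d l'. \<bar>W l i j\<bar>)) * \<rho> * K)"
      using c K0 fan_out unfolding \<rho>_def by (intro mult_left_mono mult_right_mono) auto
    with Dq_le[OF q] show "\<bar>Dq q\<bar> \<le> real CARD('o) * c * sens_bound b2 X R L * b1 l (X (l - 1) * R)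
                             * X (l - 1) * (\<Sum>i<d (l - 1). \<bar>W l i j\<bar>) * \<rho>"
      by (simp add: l' K_def mult_ac)
  qed (use fan_out in \<open>simp add: \<rho>_def\<close>)
qed

lemma proper_B_local_min_width_le:
  fixes e :: "real^'o::finite \<Rightarrow> 'y \<Rightarrow> real" and b3 :: "real \<Rightarrow> real"
  assumes D: "finite D" and lam: "0 < lam" and p: "1 \<le> p"
    and e_nonneg: "\<And>v y. 0 \<le> e v y"
    and e_diff: "\<And>v y. (\<lambda>w. e w y) differentiable (at v)"
    and e_partial: "\<And>v y S k. e v y \<le> S \<Longrightarrow>
                       \<bar>frechet_derivative (\<lambda>w. e w y) (at v) (axis k 1)\<bar> \<le> b3 S"
    and min: "proper_B_local_min (E_obj \<sigma> e D lam p L) B L d W" and l: "l \<in> {1..L - 1}"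
  defines "R \<equiv> B / lam" and "X \<equiv> act_bound b1 (\<Sum>q\<in>D. \<Sum>i<d 0. \<bar>fst q i\<bar>) (B / lam)"
  shows "real (d l) \<le> (real CARD('o) * b3 (real (card D) * B) * sens_bound b2 X R L
                        * b1 l (X (l - 1) * R) * X (l - 1) * R / lam) powr p"
proof -
  have lm: "is_local_min (E_obj \<sigma> e D lam p L) L d W" and E: "E_obj \<sigma> e D lam p L d W \<le> B"
    and proper: "is_proper L d W"
    using min by (auto simp: proper_B_local_min_def)
  have valid: "valid_weights L d W" using lm by (simp add: is_local_min_def)
  have rows: "\<And>m. m \<in> {1..L} \<Longrightarrow> (\<Sum>i<d (m - 1). row_pnorm p d W m i) \<le> R"
    unfolding R_def using E e_nonneg lam by (rule E_obj_le_imp_row_pnorm_sum_le)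
  have fan_in: "\<And>m k. m \<in> {1..L} \<Longrightarrow> (\<Sum>i<d (m - 1). \<bar>W m i k\<bar>) \<le> R"
    using rows abs_le_row_pnorm[OF valid p] by (meson order_trans sum_mono)
  have x: "\<bar>fst q i\<bar> \<le> (\<Sum>q\<in>D. \<Sum>i<d 0. \<bar>fst q i\<bar>)" if "q \<in> D" "i < d 0" for q i
  proof -
    have "\<bar>fst q i\<bar> \<le> (\<Sum>i<d 0. \<bar>fst q i\<bar>)" using that by (intro member_le_sum) auto
    also have "\<dots> \<le> (\<Sum>q\<in>D. \<Sum>i<d 0. \<bar>fst q i\<bar>)" using that D by (intro member_le_sum sum_nonneg) auto
    finally show ?thesis .
  qed
  have X0: "0 \<le> (\<Sum>q\<in>D. \<Sum>i<d 0. \<bar>fst q i\<bar>)" by (simp add: sum_nonneg)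
  have "lam \<le> real CARD('o) * b3 (real (card D) * B) * sens_bound b2 X R L
              * b1 l (X (l - 1) * R) * X (l - 1) * (\<Sum>i<d (l - 1). \<bar>W l i j\<bar>)" if "j < d l" for j
    unfolding X_def R_def[symmetric]
    by (rule local_min_fan_in_lower_bound[OF lm D lam p x X0 fan_in e_diff
          e_partial[OF E_obj_le_imp_loss_le[OF E e_nonneg lam D]] l that
          proper_imp_row_pnorm_fan_out_pos[OF proper l that]])
  moreover have "(\<Sum>i<d (l - 1). (\<Sum>j<d l. \<bar>W l i j\<bar> powr p) powr (1/p)) \<le> R"
    using rows[of l] l by (simp add: row_pnorm_def) linarith
  ultimately show ?thesis by (rule card_le_of_column_lower_bound[OF p lam])
qed

end

theorem lemma3:
  fixes L d0 :: nat
    and \<sigma> :: "nat \<Rightarrow> real \<Rightarrow> real"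
    and b1 b2 :: "nat \<Rightarrow> real \<Rightarrow> real"
    and e :: "real^'o::finite \<Rightarrow> 'y \<Rightarrow> real"
    and b3 :: "real \<Rightarrow> real"
    and D :: "((nat \<Rightarrow> real) \<times> 'y) set"
    and lam p B :: real
  assumes L: "1 \<le> L"
    and D: "finite D"
    and sigma_diff: "\<And>l s. l \<in> {1..L} \<Longrightarrow> \<sigma> l differentiable (at s)"
    and b_nonneg: "\<And>l S. l \<in> {1..L} \<Longrightarrow> 0 \<le> S \<Longrightarrow> 0 \<le> b1 l S \<and> 0 \<le> b2 l S"
    and sigma_b1: "\<And>l S s. l \<in> {1..L} \<Longrightarrow> \<bar>s\<bar> \<le> S \<Longrightarrow> \<bar>\<sigma> l s\<bar> \<le> b1 l S * \<bar>s\<bar>"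
    and sigma_b2: "\<And>l S s. l \<in> {1..L} \<Longrightarrow> \<bar>s\<bar> \<le> S \<Longrightarrow> \<bar>deriv (\<sigma> l) s\<bar> \<le> b2 l S"
    and e_nonneg: "\<And>v y. 0 \<le> e v y"
    and e_diff: "\<And>v y. (\<lambda>w. e w y) differentiable (at v)"
    and b3_nonneg: "\<And>S. 0 \<le> S \<Longrightarrow> 0 \<le> b3 S"
    and e_b3: "\<And>v y S k. e v y \<le> S \<Longrightarrow>
                 \<bar>frechet_derivative (\<lambda>w. e w y) (at v) (axis k 1)\<bar> \<le> b3 S"
    and lam: "0 < lam"
    and p: "1 \<le> p"
  shows "\<exists>M. \<forall>d. d 0 = d0 \<and> d L = CARD('o) \<and>
                (\<exists>W. proper_B_local_min (E_obj \<sigma> e D lam p L) B L d W)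
             \<longrightarrow> (\<forall>l\<in>{1..L-1}. d l \<le> M)"
proof -
  interpret activation_bounds L \<sigma> b1 b2
    using sigma_diff b_nonneg sigma_b1 sigma_b2 by unfold_locales auto
  define R where "R = B / lam"
  define X where "X = act_bound b1 (\<Sum>q\<in>D. \<Sum>i<d0. \<bar>fst q i\<bar>) R"
  define width where "width l = (real CARD('o) * b3 (real (card D) * B) * sens_bound b2 X R L
                                 * b1 l (X (l - 1) * R) * X (l - 1) * R / lam) powr p" for l
  have "d l \<le> (\<Sum>l\<in>{1..L-1}. nat \<lceil>width l\<rceil>)"
    if "d 0 = d0" and "proper_B_local_min (E_obj \<sigma> e D lam p L) B L d W" and l: "l \<in> {1..L-1}"
    for d W l
  proof -
    have "real (d l) \<le> width l"
      using proper_B_local_min_width_le[where ?b3.0 = b3, OF D lam p e_nonneg e_diff e_b3 that(2) l] that(1)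
      by (simp add: width_def R_def X_def)
    then have "d l \<le> nat \<lceil>width l\<rceil>" by linarith
    also have "\<dots> \<le> (\<Sum>l\<in>{1..L-1}. nat \<lceil>width l\<rceil>)" using l by (intro member_le_sum) auto
    finally show ?thesis .
  qed
  then show ?thesis by blast
qed

end
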